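(* Let $R$ be a unital associative ring and $$A=\begin{pmatrix}1&1&1\\1&a&b\\1&c&d\end{pmatrix}\in\widehat{\cal S},\qquad \Phi(A)=\begin{pmatrix}1&1&1\\1&a'&b'\\1&c'&d'\end{pmatrix}.$$ Then $$a'=(d-1)^{-1}(d-c)a^{-1}(db^{-1}-ca^{-1})^{-1}(db^{-1}-1),\quad b'=(c-1)^{-1}(d-c)b^{-1}(db^{-1}-ca^{-1})^{-1}(ca^{-1}-1),$$ $$c'=(b-1)^{-1}(b-a)a^{-1}(db^{-1}-ca^{-1})^{-1}(db^{-1}-1),\quad d'=(a-1)^{-1}(b-a)b^{-1}(db^{-1}-ca^{-1})^{-1}(ca^{-1}-1).$$
   Context: $R^*$: units of $R$. $M_3^*(R)$: invertible $3\times3$ matrices; $M_3^\star(R)$: matrices with all entries in $R^*$. $J_1(M)=M^{-1}$; $J_2(M)_{jk}=(M_{kj})^{-1}$; $J=J_2\circ J_1$. $\widehat M_3(R)$: matrices whose first row and column consist of $1$'s. For $A=\{a_{j,k}\}\in M_3^\star(R)$: $\Lambda^L(A)_{j,k}=a_{1,1}a_{j,1}^{-1}a_{j,k}a_{1,k}^{-1}$. $\Phi(A)=J_2(\Lambda^L(A^{-1}))$. ${\cal S}=\{M\in M_3(R):$ all square submatrices of $M$ are invertible and $J_2(M)$ is invertible$\}$, $\widehat{\cal S}={\cal S}\cap\widehat M_3(R)$. *)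

theory Defs
  imports Main
begin

text \<open>A 3x3 matrix over R is a function nat => nat => R, of which only the
entries with indices in {1,2,3} are meaningful.\<close>

type_synonym 'a mat3 = "nat \<Rightarrow> nat \<Rightarrow> 'a"

definition idx :: "nat set" where "idx = {1..3}"

definition is_unit_r :: "'a::ring_1 \<Rightarrow> bool" where
  "is_unit_r x \<longleftrightarrow> (\<exists>y. x * y = 1 \<and> y * x = 1)"

definition rinv :: "'a::ring_1 \<Rightarrow> 'a" where
  "rinv x = (THE y. x * y = 1 \<and> y * x = 1)"

definition is_inverse_on :: "nat set \<Rightarrow> nat set \<Rightarrow> 'a::ring_1 mat3 \<Rightarrow> 'a mat3 \<Rightarrow> bool" where
  "is_inverse_on I J M B \<longleftrightarrow>
     (\<forall>i\<in>I. \<forall>i'\<in>I. (\<Sum>j\<in>J. M i j * B j i') = (if i = i' then 1 else 0)) \<and>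
     (\<forall>j\<in>J. \<forall>j'\<in>J. (\<Sum>i\<in>I. B j i * M i j') = (if j = j' then 1 else 0))"

definition invertible3 :: "'a::ring_1 mat3 \<Rightarrow> bool" where
  "invertible3 M \<longleftrightarrow> (\<exists>B. is_inverse_on idx idx M B)"

definition inv3 :: "'a::ring_1 mat3 \<Rightarrow> 'a mat3" where
  "inv3 M = (SOME B. is_inverse_on idx idx M B)"

definition J2 :: "'a::ring_1 mat3 \<Rightarrow> 'a mat3" where
  "J2 M = (\<lambda>j k. rinv (M k j))"

definition LambdaL :: "'a::ring_1 mat3 \<Rightarrow> 'a mat3" where
  "LambdaL A = (\<lambda>j k. A 1 1 * rinv (A j 1) * A j k * rinv (A 1 k))"

definition Phi :: "'a::ring_1 mat3 \<Rightarrow> 'a mat3" where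
  "Phi A = J2 (LambdaL (inv3 A))"

definition all_square_submatrices_invertible :: "'a::ring_1 mat3 \<Rightarrow> bool" where
  "all_square_submatrices_invertible M \<longleftrightarrow>
     (\<forall>I J. I \<subseteq> idx \<and> J \<subseteq> idx \<and> I \<noteq> {} \<and> card I = card J \<longrightarrow>
        (\<exists>B. is_inverse_on I J M B))"

definition in_S :: "'a::ring_1 mat3 \<Rightarrow> bool" where
  "in_S M \<longleftrightarrow> all_square_submatrices_invertible M \<and> invertible3 (J2 M)"

definition in_hatM :: "'a::ring_1 mat3 \<Rightarrow> bool" where
  "in_hatM M \<longleftrightarrow> (\<forall>k\<in>idx. M 1 k = 1 \<and> M k 1 = 1)"

definition in_hatS :: "'a::ring_1 mat3 \<Rightarrow> bool" where
  "in_hatS M \<longleftrightarrow> in_S M \<and> in_hatM M"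

definition hatmat :: "'a::ring_1 \<Rightarrow> 'a \<Rightarrow> 'a \<Rightarrow> 'a \<Rightarrow> 'a mat3" where
  "hatmat a b c d = (\<lambda>i j. if i = 1 \<or> j = 1 then 1
       else if i = 2 \<and> j = 2 then a else if i = 2 \<and> j = 3 then b
       else if i = 3 \<and> j = 2 then c else if i = 3 \<and> j = 3 then d else 0)"

end

theory Submission
  imports Defs
begin

text \<open>Write X for the inverse of A. Every entry of X is a unit: by a Schur-complement
argument on the equations A X = 1 and X A = 1, the entry X i j has a left and a right inverse
as soon as the complementary 2x2 minor of A (rows other than j, columns other than i) is
invertible. Unfolding the definitions then gives
Phi(A) j k = (X 1 j (X k j)^-1) (X k 1 (X 1 1)^-1), a product of two ratios of entries in
one column of X. Each column of X lies in the kernel of two rows of A (the rows not matching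
its index), and for A = [[1,1,1],[1,a,b],[1,c,d]] these kernels are solved explicitly,
giving the stated formulas.\<close>

section \<open>Units in a noncommutative ring\<close>

lemma is_unit_rI:
  fixes x :: "'a::ring_1"
  assumes "L * x = 1" "x * R = 1"
  shows "is_unit_r x"
proof -
  have "L = L * (x * R)" using assms by simp
  also have "\<dots> = (L * x) * R" by (simp add: mult.assoc)
  finally have "L = R" using assms by simp
  then show ?thesis using assms unfolding is_unit_r_def by blast
qed

lemma rinv_inverse:
  fixes x :: "'a::ring_1"
  assumes "is_unit_r x"
  shows "x * rinv x = 1" "rinv x * x = 1"
proof -
  obtain y where y: "x * y = 1" "y * x = 1" using assms unfolding is_unit_r_def by blast
  have "z = y" if "x * z = 1 \<and> z * x = 1" for z
  proof -
    have "z = (y * x) * z" using y by simp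
    also have "\<dots> = y * (x * z)" by (simp add: mult.assoc)
    finally show "z = y" using that by simp
  qed
  then have "rinv x = y" unfolding rinv_def using y by (intro the_equality) blast+
  then show "x * rinv x = 1" "rinv x * x = 1" using y by auto
qed

lemma rinv_unique:
  fixes x :: "'a::ring_1"
  assumes "x * y = 1" "y * x = 1"
  shows "rinv x = y"
proof -
  have u: "is_unit_r x" using assms unfolding is_unit_r_def by blast
  have "rinv x = (rinv x * x) * y" using assms by (simp add: mult.assoc)
  then show ?thesis using rinv_inverse[OF u] by simp
qed

lemma is_unit_r_rinv: "is_unit_r (x::'a::ring_1) \<Longrightarrow> is_unit_r (rinv x)"
  using rinv_inverse unfolding is_unit_r_def by blast

lemma rinv_rinv: "is_unit_r (x::'a::ring_1) \<Longrightarrow> rinv (rinv x) = x"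
  using rinv_unique[of "rinv x" x] rinv_inverse[of x] by simp

lemma
  fixes x y :: "'a::ring_1"
  assumes "is_unit_r x" "is_unit_r y"
  shows is_unit_r_mult: "is_unit_r (x * y)"
    and rinv_mult: "rinv (x * y) = rinv y * rinv x"
proof -
  have r: "(x * y) * (rinv y * rinv x) = 1"
  proof -
    have "(x * y) * (rinv y * rinv x) = x * (y * rinv y) * rinv x" by (simp add: mult.assoc)
    then show ?thesis using rinv_inverse[OF assms(1)] rinv_inverse[OF assms(2)] by simp
  qed
  have l: "(rinv y * rinv x) * (x * y) = 1"
  proof -
    have "(rinv y * rinv x) * (x * y) = rinv y * (rinv x * x) * y" by (simp add: mult.assoc)
    then show ?thesis using rinv_inverse[OF assms(1)] rinv_inverse[OF assms(2)] by simp
  qed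
  show "is_unit_r (x * y)" using is_unit_rI[OF l r] .
  show "rinv (x * y) = rinv y * rinv x" using rinv_unique[OF r l] .
qed

lemma rinv_alternating_product:
  fixes u1 u2 u3 u4 :: "'a::ring_1"
  assumes "is_unit_r u1" "is_unit_r u2" "is_unit_r u3" "is_unit_r u4"
  shows "rinv (u1 * rinv u2 * u3 * rinv u4) = u4 * rinv u3 * u2 * rinv u1"
proof -
  have u: "is_unit_r (u1 * rinv u2)" "is_unit_r (u1 * rinv u2 * u3)"
    using assms by (simp_all add: is_unit_r_mult is_unit_r_rinv)
  have "rinv (u1 * rinv u2 * u3 * rinv u4) = rinv (rinv u4) * (rinv u3 * (rinv (rinv u2) * rinv u1))"
    using u assms by (simp add: rinv_mult is_unit_r_rinv)
  then show ?thesis using assms by (simp add: rinv_rinv mult.assoc)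
qed

section \<open>Entries of the inverse of a 3x3 matrix\<close>

lemma idx_eq: "idx = {1, 2, 3::nat}"
  by (auto simp: idx_def)

lemma idx_complement:
  assumes "j \<in> idx"
  obtains m1 m2 where "idx = {j, m1, m2}" "distinct [j, m1, m2]"
proof -
  have "j = 1 \<or> j = 2 \<or> j = 3" using assms by (auto simp: idx_eq)
  then show ?thesis
    using that[of 2 3] that[of 1 3] that[of 1 2] by (auto simp: idx_eq insert_commute)
qed

lemma sum_idx_split:
  assumes "idx = {i, k1, k2}" "distinct [i, k1, k2]"
  shows "sum f idx = f i + f k1 + f k2"
  unfolding assms(1) using assms(2) by (simp add: add.assoc)

lemma is_inverse_on_2x2:
  assumes "is_inverse_on {m1, m2} {k1, k2} A B" "m1 \<noteq> m2" "k1 \<noteq> k2"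
  shows "A m1 k1 * B k1 m1 + A m1 k2 * B k2 m1 = 1"
        "A m1 k1 * B k1 m2 + A m1 k2 * B k2 m2 = 0"
        "A m2 k1 * B k1 m1 + A m2 k2 * B k2 m1 = 0"
        "A m2 k1 * B k1 m2 + A m2 k2 * B k2 m2 = 1"
        "B k1 m1 * A m1 k1 + B k1 m2 * A m2 k1 = 1"
        "B k1 m1 * A m1 k2 + B k1 m2 * A m2 k2 = 0"
        "B k2 m1 * A m1 k1 + B k2 m2 * A m2 k1 = 0"
        "B k2 m1 * A m1 k2 + B k2 m2 * A m2 k2 = 1"
  using assms unfolding is_inverse_on_def by (auto simp: insert_commute)

text \<open>Eliminating y1, y2 with the inverse T of the block S leaves a left inverse of x.\<close>

lemma left_invertible_if_complement_invertible:
  fixes x :: "'a::ring_1"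
  assumes "\<alpha>1 * x + s11 * y1 + s12 * y2 = 0" "\<alpha>2 * x + s21 * y1 + s22 * y2 = 0"
    "\<beta> * x + \<gamma>1 * y1 + \<gamma>2 * y2 = 1"
    "t11 * s11 + t12 * s21 = 1" "t11 * s12 + t12 * s22 = 0"
    "t21 * s11 + t22 * s21 = 0" "t21 * s12 + t22 * s22 = 1"
  shows "\<exists>L. L * x = 1"
proof -
  have a1: "s11 * y1 + s12 * y2 = -(\<alpha>1 * x)" and a2: "s21 * y1 + s22 * y2 = -(\<alpha>2 * x)"
    using assms(1,2) by (simp_all add: eq_neg_iff_add_eq_0 algebra_simps)
  have "y1 = (t11 * s11 + t12 * s21) * y1 + (t11 * s12 + t12 * s22) * y2" using assms by simp
  also have "\<dots> = t11 * (s11 * y1 + s12 * y2) + t12 * (s21 * y1 + s22 * y2)"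
    by (simp add: algebra_simps)
  finally have y1: "y1 = -((t11 * \<alpha>1 + t12 * \<alpha>2) * x)" using a1 a2 by (simp add: algebra_simps)
  have "y2 = (t21 * s11 + t22 * s21) * y1 + (t21 * s12 + t22 * s22) * y2" using assms by simp
  also have "\<dots> = t21 * (s11 * y1 + s12 * y2) + t22 * (s21 * y1 + s22 * y2)"
    by (simp add: algebra_simps)
  finally have y2: "y2 = -((t21 * \<alpha>1 + t22 * \<alpha>2) * x)" using a1 a2 by (simp add: algebra_simps)
  have "(\<beta> - \<gamma>1 * (t11 * \<alpha>1 + t12 * \<alpha>2) - \<gamma>2 * (t21 * \<alpha>1 + t22 * \<alpha>2)) * x = 1"
    using assms(3) unfolding y1 y2 by (simp add: algebra_simps)
  then show ?thesis by blast
qed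

lemma right_invertible_if_complement_invertible:
  fixes x :: "'a::ring_1"
  assumes "x * \<alpha>1 + y1 * s11 + y2 * s21 = 0" "x * \<alpha>2 + y1 * s12 + y2 * s22 = 0"
    "x * \<beta> + y1 * \<gamma>1 + y2 * \<gamma>2 = 1"
    "s11 * t11 + s12 * t21 = 1" "s11 * t12 + s12 * t22 = 0"
    "s21 * t11 + s22 * t21 = 0" "s21 * t12 + s22 * t22 = 1"
  shows "\<exists>R. x * R = 1"
proof -
  have a1: "y1 * s11 + y2 * s21 = -(x * \<alpha>1)" and a2: "y1 * s12 + y2 * s22 = -(x * \<alpha>2)"
    using assms(1,2) by (simp_all add: eq_neg_iff_add_eq_0 algebra_simps)
  have "y1 = y1 * (s11 * t11 + s12 * t21) + y2 * (s21 * t11 + s22 * t21)" using assms by simp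
  also have "\<dots> = (y1 * s11 + y2 * s21) * t11 + (y1 * s12 + y2 * s22) * t21"
    by (simp add: algebra_simps)
  finally have y1: "y1 = -(x * (\<alpha>1 * t11 + \<alpha>2 * t21))" using a1 a2 by (simp add: algebra_simps)
  have "y2 = y1 * (s11 * t12 + s12 * t22) + y2 * (s21 * t12 + s22 * t22)" using assms by simp
  also have "\<dots> = (y1 * s11 + y2 * s21) * t12 + (y1 * s12 + y2 * s22) * t22"
    by (simp add: algebra_simps)
  finally have y2: "y2 = -(x * (\<alpha>1 * t12 + \<alpha>2 * t22))" using a1 a2 by (simp add: algebra_simps)
  have "x * (\<beta> - (\<alpha>1 * t11 + \<alpha>2 * t21) * \<gamma>1 - (\<alpha>1 * t12 + \<alpha>2 * t22) * \<gamma>2) = 1"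
    using assms(3) unfolding y1 y2 by (simp add: algebra_simps)
  then show ?thesis by blast
qed

lemma inverse_entry_unit_if_complementary_minor_invertible:
  fixes A X :: "'a::ring_1 mat3"
  assumes inv: "is_inverse_on idx idx A X"
    and minor: "is_inverse_on {m1, m2} {k1, k2} A B"
    and rows: "idx = {j, m1, m2}" "distinct [j, m1, m2]"
    and cols: "idx = {i, k1, k2}" "distinct [i, k1, k2]"
  shows "is_unit_r (X i j)"
proof -
  have mem: "j \<in> idx" "m1 \<in> idx" "m2 \<in> idx" "i \<in> idx" "k1 \<in> idx" "k2 \<in> idx"
    using rows cols by auto
  have AX: "(\<Sum>k\<in>idx. A m k * X k n) = (if m = n then 1 else 0)"
   and XA: "(\<Sum>k\<in>idx. X n k * A k m) = (if n = m then 1 else 0)"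
    if "m \<in> idx" "n \<in> idx" for m n
    using inv that unfolding is_inverse_on_def by auto
  have "m1 \<noteq> j" "m2 \<noteq> j" "k1 \<noteq> i" "k2 \<noteq> i" "m1 \<noteq> m2" "k1 \<noteq> k2"
    using rows(2) cols(2) by auto
  have col: "A m i * X i j + A m k1 * X k1 j + A m k2 * X k2 j = (if m = j then 1 else 0)"
    if "m \<in> idx" for m
    using AX[OF that mem(1)] unfolding sum_idx_split[OF cols] .
  have row: "X i j * A j k + X i m1 * A m1 k + X i m2 * A m2 k = (if i = k then 1 else 0)"
    if "k \<in> idx" for k
    using XA[OF that mem(4)] unfolding sum_idx_split[OF rows] .
  note S = is_inverse_on_2x2[OF minor \<open>m1 \<noteq> m2\<close> \<open>k1 \<noteq> k2\<close>]
  obtain L where "L * X i j = 1"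
    using left_invertible_if_complement_invertible[OF
        col[OF mem(2), unfolded if_not_P[OF \<open>m1 \<noteq> j\<close>]]
        col[OF mem(3), unfolded if_not_P[OF \<open>m2 \<noteq> j\<close>]]
        col[OF mem(1), unfolded if_P[OF refl]] S(5-8)] ..
  moreover obtain R where "X i j * R = 1"
    using right_invertible_if_complement_invertible[OF
        row[OF mem(5), unfolded if_not_P[OF \<open>k1 \<noteq> i\<close>[symmetric]]]
        row[OF mem(6), unfolded if_not_P[OF \<open>k2 \<noteq> i\<close>[symmetric]]]
        row[OF mem(4), unfolded if_P[OF refl]] S(1-4)] ..
  ultimately show ?thesis by (rule is_unit_rI)
qed

lemma is_inverse_on_inv3:
  assumes "all_square_submatrices_invertible M"
  shows "is_inverse_on idx idx M (inv3 M)"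
proof -
  have "\<exists>B. is_inverse_on idx idx M B"
    using assms unfolding all_square_submatrices_invertible_def by (auto simp: idx_eq)
  then show ?thesis unfolding inv3_def by (rule someI_ex)
qed

lemma inv3_entry_unit:
  assumes M: "all_square_submatrices_invertible M" and "i \<in> idx" "j \<in> idx"
  shows "is_unit_r (inv3 M i j)"
proof -
  obtain m1 m2 where rows: "idx = {j, m1, m2}" "distinct [j, m1, m2]"
    using idx_complement[OF \<open>j \<in> idx\<close>] .
  obtain k1 k2 where cols: "idx = {i, k1, k2}" "distinct [i, k1, k2]"
    using idx_complement[OF \<open>i \<in> idx\<close>] .
  have "{m1, m2} \<subseteq> idx" "{k1, k2} \<subseteq> idx" "card {m1, m2} = card {k1, k2}"
    using rows cols by auto
  then obtain B where "is_inverse_on {m1, m2} {k1, k2} M B"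
    using M unfolding all_square_submatrices_invertible_def by blast
  from inverse_entry_unit_if_complementary_minor_invertible[OF is_inverse_on_inv3[OF M] this rows cols]
  show ?thesis .
qed

lemma entry_unit:
  assumes "all_square_submatrices_invertible M" "i \<in> idx" "j \<in> idx"
  shows "is_unit_r (M i j)"
proof -
  obtain B where "is_inverse_on {i} {j} M B"
    using assms unfolding all_square_submatrices_invertible_def by fastforce
  then have "B j i * M i j = 1" "M i j * B j i = 1" unfolding is_inverse_on_def by auto
  then show ?thesis by (rule is_unit_rI)
qed

lemma Phi_eq_column_ratios:
  assumes M: "all_square_submatrices_invertible M" and "j \<in> idx" "k \<in> idx"
  shows "Phi M j k = (inv3 M 1 j * rinv (inv3 M k j)) * (inv3 M k 1 * rinv (inv3 M 1 1))"
proof -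
  have "1 \<in> idx" by (simp add: idx_eq)
  then have "rinv (inv3 M 1 1 * rinv (inv3 M k 1) * inv3 M k j * rinv (inv3 M 1 j))
      = inv3 M 1 j * rinv (inv3 M k j) * inv3 M k 1 * rinv (inv3 M 1 1)"
    using assms by (intro rinv_alternating_product inv3_entry_unit) auto
  then show ?thesis by (simp add: Phi_def J2_def LambdaL_def mult.assoc)
qed

lemma Phi_first_row_col:
  assumes M: "all_square_submatrices_invertible M" and "k \<in> idx"
  shows "Phi M 1 k = 1" "Phi M k 1 = 1"
proof -
  have "1 \<in> idx" by (simp add: idx_eq)
  have u: "is_unit_r (inv3 M k 1)" "is_unit_r (inv3 M 1 k)" "is_unit_r (inv3 M 1 1)"
    using inv3_entry_unit[OF M] \<open>1 \<in> idx\<close> assms(2) by auto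
  have "Phi M 1 k = inv3 M 1 1 * (rinv (inv3 M k 1) * inv3 M k 1) * rinv (inv3 M 1 1)"
    and "Phi M k 1 = inv3 M 1 k * rinv (inv3 M 1 k) * (inv3 M 1 1 * rinv (inv3 M 1 1))"
    using Phi_eq_column_ratios[OF M] assms(2) \<open>1 \<in> idx\<close> by (simp_all add: mult.assoc)
  then show "Phi M 1 k = 1" "Phi M k 1 = 1"
    using rinv_inverse[OF u(1)] rinv_inverse[OF u(2)] rinv_inverse[OF u(3)] by simp_all
qed

section \<open>Kernels of 2x3 matrices with first column of ones\<close>

lemma kernel_ratio_second:
  fixes p q r c d g :: "'a::ring_1"
  assumes h: "p + q + r = 0" "p + c * q + d * r = 0" and u: "is_unit_r (d - 1)" and g: "q * g = 1"
  shows "p * g = -(rinv (d - 1) * (d - c))"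
proof -
  define e where "e = rinv (d - 1)"
  have E: "e * (d - 1) = 1" using rinv_inverse[OF u] e_def by simp
  have "(c - 1) * q + (d - 1) * r = (p + c * q + d * r) - (p + q + r)" by (simp add: algebra_simps)
  then have "e * ((c - 1) * q + (d - 1) * r) = 0" using h by simp
  then have "e * (c - 1) * q + r = 0" using E by (simp add: distrib_left mult.assoc[symmetric])
  then have r: "r = -(e * (c - 1) * q)" by (rule add_eq_0_iff[THEN iffD1])
  have "p + (q + r) = 0" using h(1) by (simp add: add.assoc)
  then have p: "p = -q - r" by (simp add: add_eq_0_iff2)
  have "p * g = -(q * g) + e * (c - 1) * (q * g)" unfolding p r by (simp add: algebra_simps)
  also have "\<dots> = -(e * (d - 1)) + e * (c - 1)" using g E by simp
  also have "\<dots> = -(e * (d - c))" by (simp add: algebra_simps)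
  finally show ?thesis unfolding e_def .
qed

lemma kernel_ratio_third:
  fixes p q r c d g :: "'a::ring_1"
  assumes h: "p + q + r = 0" "p + c * q + d * r = 0" and u: "is_unit_r (c - 1)" and g: "r * g = 1"
  shows "p * g = rinv (c - 1) * (d - c)"
proof -
  define e where "e = rinv (c - 1)"
  have E: "e * (c - 1) = 1" using rinv_inverse[OF u] e_def by simp
  have "(c - 1) * q + (d - 1) * r = (p + c * q + d * r) - (p + q + r)" by (simp add: algebra_simps)
  then have "e * ((c - 1) * q + (d - 1) * r) = 0" using h by simp
  then have "q + e * (d - 1) * r = 0" using E by (simp add: distrib_left mult.assoc[symmetric])
  then have q: "q = -(e * (d - 1) * r)" by (rule add_eq_0_iff2[THEN iffD1])
  have "p + (q + r) = 0" using h(1) by (simp add: add.assoc)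
  then have p: "p = -q - r" by (simp add: add_eq_0_iff2)
  have "p * g = e * (d - 1) * (r * g) - r * g" unfolding p q by (simp add: algebra_simps)
  also have "\<dots> = e * (d - 1) - e * (c - 1)" using g E by simp
  also have "\<dots> = e * (d - c)" by (simp add: algebra_simps)
  finally show ?thesis unfolding e_def .
qed

lemma kernel_ratios_first:
  fixes x s t a b c d g :: "'a::ring_1"
  assumes h: "x + a * s + b * t = 0" "x + c * s + d * t = 0"
    and ua: "is_unit_r a" and ub: "is_unit_r b" and uD: "is_unit_r (d * rinv b - c * rinv a)"
    and g: "x * g = 1"
  shows "s * g = -(rinv a * rinv (d * rinv b - c * rinv a) * (d * rinv b - 1))"
    "t * g = rinv b * rinv (d * rinv b - c * rinv a) * (c * rinv a - 1)"
proof -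
  define D where "D = d * rinv b - c * rinv a"
  define S where "S = s * g"
  define T where "T = t * g"
  note A = rinv_inverse[OF ua] and B = rinv_inverse[OF ub]
    and DD = rinv_inverse[OF uD, folded D_def]
  have "1 + a * S + b * T = (x + a * s + b * t) * g"
    and "1 + c * S + d * T = (x + c * s + d * t) * g"
    using g unfolding S_def T_def by (simp_all add: algebra_simps)
  then have h1: "1 + a * S + b * T = 0" and h2: "1 + c * S + d * T = 0" using h by simp_all
  have "b * T = -(1 + a * S)" using h1 by (rule add_eq_0_iff[THEN iffD1])
  then have "rinv b * (b * T) = rinv b * -(1 + a * S)" by (rule arg_cong)
  then have "T = rinv b * -(1 + a * S)" using B by (simp add: mult.assoc[symmetric])
  then have T: "T = -(rinv b * (1 + a * S))" by (simp only: mult_minus_right)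
  have Da: "D * a = d * rinv b * a - c" unfolding D_def using A by (simp add: algebra_simps)
  have "0 = 1 + c * S + d * T" using h2 by simp
  also have "\<dots> = 1 + c * S - d * rinv b * (1 + a * S)" unfolding T by (simp add: algebra_simps)
  also have "\<dots> = 1 - d * rinv b - (d * rinv b * a - c) * S" by (simp add: algebra_simps)
  also have "\<dots> = 1 - d * rinv b - D * a * S" using Da by simp
  finally have "D * a * S = 1 - d * rinv b" by (simp add: algebra_simps)
  then have "rinv a * rinv D * (D * a * S) = rinv a * rinv D * (1 - d * rinv b)" by simp
  moreover have "rinv a * rinv D * (D * a * S) = rinv a * (rinv D * D) * a * S"
    by (simp add: mult.assoc)
  ultimately have S: "S = rinv a * rinv D * (1 - d * rinv b)" using A DD by simp
  then show "s * g = -(rinv a * rinv (d * rinv b - c * rinv a) * (d * rinv b - 1))"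
    unfolding S_def D_def by (simp add: algebra_simps)
  have "1 + a * S = 1 + (a * rinv a) * rinv D * (1 - d * rinv b)" unfolding S by (simp add: mult.assoc)
  also have "\<dots> = rinv D * D + rinv D * (1 - d * rinv b)" using A DD by simp
  also have "\<dots> = rinv D * (1 - c * rinv a)" unfolding D_def by (simp add: algebra_simps)
  finally have "T = -(rinv b * rinv D * (1 - c * rinv a))" unfolding T by (simp add: mult.assoc)
  then show "t * g = rinv b * rinv (d * rinv b - c * rinv a) * (c * rinv a - 1)"
    unfolding T_def D_def by (simp add: algebra_simps)
qed

lemma is_unit_r_minus_one_if_minor_invertible:
  fixes A :: "'a::ring_1 mat3"
  assumes "is_inverse_on {m1, m2} {k1, k2} A B" "m1 \<noteq> m2" "k1 \<noteq> k2"
    "A m1 k1 = 1" "A m1 k2 = 1" "A m2 k1 = 1"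
  shows "is_unit_r (A m2 k2 - 1)"
proof -
  note s = is_inverse_on_2x2[OF assms(1-3), unfolded assms(4-6) mult_1_left mult_1_right]
  let ?x = "A m2 k2" and ?v = "B k2 m2"
  have "?v * (?x - 1) = (B k2 m1 + ?v * ?x) - (B k2 m1 + ?v)" by (simp add: algebra_simps)
  also have "\<dots> = 1" unfolding s(7,8) by simp
  finally have l: "?v * (?x - 1) = 1" .
  have "(?x - 1) * ?v = (B k1 m2 + ?x * ?v) - (B k1 m2 + ?v)" by (simp add: algebra_simps)
  also have "\<dots> = 1" unfolding s(2,4) by simp
  finally have r: "(?x - 1) * ?v = 1" .
  show ?thesis using is_unit_rI[OF l r] .
qed

text \<open>If (b_ij) inverts [[a,b],[c,d]], then b * b22 inverts d b^-1 - c a^-1.\<close>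

lemma is_unit_r_d_rinv_b_minus_c_rinv_a:
  fixes a b c d :: "'a::ring_1"
  assumes ua: "is_unit_r a" and ub: "is_unit_r b"
    and h: "a * b12 + b * b22 = 0" "c * b12 + d * b22 = 1" "b21 * a + b22 * c = 0" "b21 * b + b22 * d = 1"
  shows "is_unit_r (d * rinv b - c * rinv a)"
proof -
  note A = rinv_inverse[OF ua] and B = rinv_inverse[OF ub]
  have "b * b22 = -(a * b12)" using h(1) by (simp add: eq_neg_iff_add_eq_0 add.commute)
  then have "c * rinv a * (b * b22) = -(c * (rinv a * a) * b12)" by (simp add: mult.assoc)
  then have "(d * rinv b - c * rinv a) * (b * b22) = d * (rinv b * b) * b22 + c * b12"
    using A by (simp add: algebra_simps)
  then have r: "(d * rinv b - c * rinv a) * (b * b22) = 1" using B h(2) by (simp add: add.commute)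
  have "b21 * a = -(b22 * c)" using h(3) by (simp add: eq_neg_iff_add_eq_0)
  then have "b22 * c * rinv a = -(b21 * (a * rinv a))" by (simp add: mult.assoc[symmetric])
  then have "b22 * (d * rinv b - c * rinv a) = (b21 * b + b22 * d) * rinv b"
    using A B by (simp add: algebra_simps)
  then have "b * b22 * (d * rinv b - c * rinv a) = b * rinv b" using h(4) by (simp add: mult.assoc)
  then have l: "(b * b22) * (d * rinv b - c * rinv a) = 1" using B by simp
  show ?thesis using is_unit_rI[OF l r] .
qed

lemma hatmat_units:
  fixes a b c d :: "'a::ring_1"
  assumes M: "all_square_submatrices_invertible (hatmat a b c d)"
  shows "is_unit_r a" "is_unit_r b" "is_unit_r c" "is_unit_r d"
    "is_unit_r (a - 1)" "is_unit_r (b - 1)" "is_unit_r (c - 1)" "is_unit_r (d - 1)"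
    "is_unit_r (d * rinv b - c * rinv a)"
proof -
  have minor: "\<exists>B. is_inverse_on {m1, m2} {k1, k2} (hatmat a b c d) B"
    if "m1 \<noteq> m2" "k1 \<noteq> k2" "{m1, m2, k1, k2} \<subseteq> idx" for m1 m2 k1 k2
    using M that unfolding all_square_submatrices_invertible_def by auto
  show "is_unit_r a" "is_unit_r b" "is_unit_r c" "is_unit_r d"
    using entry_unit[OF M, of 2 2] entry_unit[OF M, of 2 3] entry_unit[OF M, of 3 2]
      entry_unit[OF M, of 3 3]
    by (simp_all add: idx_eq hatmat_def)
  have minus_one: "is_unit_r (hatmat a b c d m k - 1)" if "m \<in> {2, 3}" "k \<in> {2, 3}" for m k
  proof -
    have "1 \<noteq> m" "1 \<noteq> k" "{1, m, 1, k} \<subseteq> idx" using that by (auto simp: idx_eq)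
    then obtain B where "is_inverse_on {1, m} {1, k} (hatmat a b c d) B" using minor by blast
    then show ?thesis
      by (rule is_unit_r_minus_one_if_minor_invertible) (use that in \<open>auto simp: hatmat_def\<close>)
  qed
  show "is_unit_r (a - 1)" "is_unit_r (b - 1)" "is_unit_r (c - 1)" "is_unit_r (d - 1)"
    using minus_one[of 2 2] minus_one[of 2 3] minus_one[of 3 2] minus_one[of 3 3]
    by (simp_all add: hatmat_def)
  obtain B where "is_inverse_on {2, 3} {2, 3} (hatmat a b c d) B"
    using minor[of 2 3 2 3] by (auto simp: idx_eq)
  note s = is_inverse_on_2x2[OF this, simplified]
  show "is_unit_r (d * rinv b - c * rinv a)"
    by (rule is_unit_r_d_rinv_b_minus_c_rinv_a[OF \<open>is_unit_r a\<close> \<open>is_unit_r b\<close>,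
          of "B 2 3" "B 3 3" _ _ "B 3 2"])
      (use s in \<open>simp_all add: hatmat_def\<close>)
qed

lemma hatmat_inverse_columns:
  fixes a b c d :: "'a::ring_1"
  assumes "is_inverse_on idx idx (hatmat a b c d) X"
  shows "X 1 1 + a * X 2 1 + b * X 3 1 = 0" "X 1 1 + c * X 2 1 + d * X 3 1 = 0"
    "X 1 2 + X 2 2 + X 3 2 = 0" "X 1 2 + c * X 2 2 + d * X 3 2 = 0"
    "X 1 3 + X 2 3 + X 3 3 = 0" "X 1 3 + a * X 2 3 + b * X 3 3 = 0"
proof -
  have "(\<Sum>k\<in>{1, 2, 3}. hatmat a b c d m k * X k n) = 0"
    if "m \<in> {1, 2, 3}" "n \<in> {1, 2, 3}" "m \<noteq> n" for m n
    using assms that unfolding is_inverse_on_def idx_eq by auto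
  from this[of 2 1] this[of 3 1] this[of 1 2] this[of 3 2] this[of 1 3] this[of 2 3]
  show "X 1 1 + a * X 2 1 + b * X 3 1 = 0" "X 1 1 + c * X 2 1 + d * X 3 1 = 0"
    "X 1 2 + X 2 2 + X 3 2 = 0" "X 1 2 + c * X 2 2 + d * X 3 2 = 0"
    "X 1 3 + X 2 3 + X 3 3 = 0" "X 1 3 + a * X 2 3 + b * X 3 3 = 0"
    by (simp_all add: hatmat_def add.assoc)
qed

theorem lemma10:
  fixes a b c d :: "'a::ring_1"
  assumes "in_hatS (hatmat a b c d)"
  shows "\<forall>j\<in>idx. \<forall>k\<in>idx. Phi (hatmat a b c d) j k =
    hatmat
      (rinv (d - 1) * (d - c) * rinv a * rinv (d * rinv b - c * rinv a) * (d * rinv b - 1))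
      (rinv (c - 1) * (d - c) * rinv b * rinv (d * rinv b - c * rinv a) * (c * rinv a - 1))
      (rinv (b - 1) * (b - a) * rinv a * rinv (d * rinv b - c * rinv a) * (d * rinv b - 1))
      (rinv (a - 1) * (b - a) * rinv b * rinv (d * rinv b - c * rinv a) * (c * rinv a - 1))
      j k"
proof -
  let ?M = "hatmat a b c d"
  define X where "X = inv3 ?M"
  have M: "all_square_submatrices_invertible ?M" using assms by (simp add: in_hatS_def in_S_def)
  note u = hatmat_units[OF M]
  note e = hatmat_inverse_columns[OF is_inverse_on_inv3[OF M], folded X_def]
  have mem: "1 \<in> idx" "2 \<in> idx" "3 \<in> idx" by (simp_all add: idx_eq)
  have inv: "X i j * rinv (X i j) = 1" if "i \<in> idx" "j \<in> idx" for i j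
    unfolding X_def using rinv_inverse(1)[OF inv3_entry_unit[OF M that]] .
  note Phi = Phi_eq_column_ratios[OF M, folded X_def]
  note col1 = kernel_ratios_first[OF e(1,2) u(1,2,9) inv[OF mem(1,1)]]
  have "Phi ?M 2 2 = rinv (d - 1) * (d - c) * rinv a * rinv (d * rinv b - c * rinv a) * (d * rinv b - 1)"
    unfolding Phi[OF mem(2,2)] kernel_ratio_second[OF e(3,4) u(8) inv[OF mem(2,2)]] col1(1)
    by (simp add: mult.assoc)
  moreover have "Phi ?M 2 3 = rinv (c - 1) * (d - c) * rinv b * rinv (d * rinv b - c * rinv a) * (c * rinv a - 1)"
    unfolding Phi[OF mem(2,3)] kernel_ratio_third[OF e(3,4) u(7) inv[OF mem(3,2)]] col1(2)
    by (simp add: mult.assoc)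
  moreover have "Phi ?M 3 2 = rinv (b - 1) * (b - a) * rinv a * rinv (d * rinv b - c * rinv a) * (d * rinv b - 1)"
    unfolding Phi[OF mem(3,2)] kernel_ratio_second[OF e(5,6) u(6) inv[OF mem(2,3)]] col1(1)
    by (simp add: mult.assoc)
  moreover have "Phi ?M 3 3 = rinv (a - 1) * (b - a) * rinv b * rinv (d * rinv b - c * rinv a) * (c * rinv a - 1)"
    unfolding Phi[OF mem(3,3)] kernel_ratio_third[OF e(5,6) u(5) inv[OF mem(3,3)]] col1(2)
    by (simp add: mult.assoc)
  ultimately show ?thesis
    using Phi_first_row_col[OF M] by (auto simp: idx_eq hatmat_def)
qed

end
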